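(* Let $G$ be a graph on $n$ vertices with treewidth $t$, and let $(\{X_i : i\in I\}, r, T)$ be a normalized tree decomposition of $G$ of width $t$. Then there exists $l \in I$ such that $V(G)\setminus X_l$ can be partitioned into three (possibly empty) sets $V_1, V_2, V_3$ such that $G$ has no edge between $V_i$ and $V_j$ for $i\neq j$, and $|V_i| \leq \frac12\left(n - |X_l| + 1\right)$ for each $i\in\{1,2,3\}$.
   Context: A tree decomposition of $G$ is a pair $(\{X_i : i\in I\}, T)$ where $T$ is a tree with node set $I$ and each $X_i\subseteq V(G)$, such that: (1) $\bigcup_{i\in I} X_i = V(G)$; (2) for every edge $\{u,v\}\in E(G)$ there is $i\in I$ with $u,v\in X_i$; (3) for all $i,j,k\in I$, if $j$ lies on the path in $T$ from $i$ to $k$, then $X_i\cap X_k\subseteq X_j$. Its width is $\max_{i\in I}|X_i| - 1$, and the treewidth of $G$ is the minimum width over all tree decompositions of $G$. A normalized tree decomposition is a triple $(\{X_i : i\in I\}, r, T)$ where $(\{X_i\},T)$ is a tree decomposition, $T$ is rooted at $r\in I$, $|X_r| = 1$, and for every node $i$ and every child $i'$ of $i$, the symmetric difference of $X_{i'}$ and $X_i$ has exactly one element. *)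

theory Defs
  imports Complex_Main
begin

definition graph :: "'a set \<Rightarrow> 'a set set \<Rightarrow> bool" where
  "graph V E \<longleftrightarrow> finite V \<and> (\<forall>e\<in>E. \<exists>u v. e = {u, v} \<and> u \<noteq> v \<and> u \<in> V \<and> v \<in> V)"

fun walk :: "'b set set \<Rightarrow> 'b list \<Rightarrow> bool" where
  "walk ET [] = False"
| "walk ET [x] = True"
| "walk ET (x # y # xs) = ({x, y} \<in> ET \<and> walk ET (y # xs))"

definition spath :: "'b set set \<Rightarrow> 'b list \<Rightarrow> bool" where
  "spath ET xs \<longleftrightarrow> walk ET xs \<and> distinct xs"

definition on_path :: "'b set set \<Rightarrow> 'b \<Rightarrow> 'b \<Rightarrow> 'b \<Rightarrow> bool" where
  "on_path ET i j k \<longleftrightarrow> (\<exists>xs. spath ET xs \<and> hd xs = i \<and> last xs = k \<and> j \<in> set xs)"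

definition tree :: "'b set \<Rightarrow> 'b set set \<Rightarrow> bool" where
  "tree I ET \<longleftrightarrow> graph I ET \<and> I \<noteq> {} \<and>
     (\<forall>u\<in>I. \<forall>v\<in>I. \<exists>xs. walk ET xs \<and> hd xs = u \<and> last xs = v) \<and>
     \<not> (\<exists>xs. spath ET xs \<and> length xs \<ge> 3 \<and> {last xs, hd xs} \<in> ET)"

definition tree_decomp :: "'a set \<Rightarrow> 'a set set \<Rightarrow> 'b set \<Rightarrow> 'b set set \<Rightarrow> ('b \<Rightarrow> 'a set) \<Rightarrow> bool" where
  "tree_decomp V E I ET X \<longleftrightarrow> tree I ET \<and> (\<forall>i\<in>I. X i \<subseteq> V) \<and>
     (\<Union>i\<in>I. X i) = V \<and>
     (\<forall>e\<in>E. \<exists>i\<in>I. e \<subseteq> X i) \<and>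
     (\<forall>i\<in>I. \<forall>j\<in>I. \<forall>k\<in>I. on_path ET i j k \<longrightarrow> X i \<inter> X k \<subseteq> X j)"

definition width :: "'b set \<Rightarrow> ('b \<Rightarrow> 'a set) \<Rightarrow> nat" where
  "width I X = Max ((\<lambda>i. card (X i)) ` I) - 1"

text \<open>Treewidth: minimum width over all tree decompositions. Index sets are
  taken in nat, which loses no generality since trees are finite.\<close>
definition treewidth :: "'a set \<Rightarrow> 'a set set \<Rightarrow> nat" where
  "treewidth V E = (LEAST w. \<exists>(I :: nat set) ET X. tree_decomp V E I ET X \<and> width I X = w)"

definition child :: "'b set set \<Rightarrow> 'b \<Rightarrow> 'b \<Rightarrow> 'b \<Rightarrow> bool" where
  "child ET r i i' \<longleftrightarrow> {i, i'} \<in> ET \<and> i \<noteq> i' \<and> on_path ET r i i'"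

definition normalized_tree_decomp ::
  "'a set \<Rightarrow> 'a set set \<Rightarrow> 'b set \<Rightarrow> 'b \<Rightarrow> 'b set set \<Rightarrow> ('b \<Rightarrow> 'a set) \<Rightarrow> bool" where
  "normalized_tree_decomp V E I r ET X \<longleftrightarrow> tree_decomp V E I ET X \<and> r \<in> I \<and>
     card (X r) = 1 \<and>
     (\<forall>i\<in>I. \<forall>i'\<in>I. child ET r i i' \<longrightarrow> card ((X i' - X i) \<union> (X i - X i')) = 1)"

end

theory Submission
  imports Defs
begin

text \<open>
  For a node l of a tree T and a neighbour j of l, the branch of T at l towards j
  consists of all nodes whose path from l starts with the edge {l, j}.  The part
  of G at l towards j is the union of the bags in that branch, minus the bag X l.
  By the path property of tree decompositions the parts at l partition V - X l
  and no edge of G joins two different parts; hence, if every part at l is small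
  (at most (n - |X l| + 1) / 2 vertices), grouping them greedily into three
  classes gives the required partition V1, V2, V3.

  Call an oriented edge (l, j) heavy if the part at l towards j is too large.
  Across an edge whose bags differ in exactly one vertex, which is the case in a
  normalized decomposition, both orientations cannot be heavy.  Choosing a heavy
  edge (l, j) with the smallest branch at l towards j, the node j has no heavy
  edge at all, because the branches at j (other than towards l) are strictly
  contained in that branch.
\<close>

subsection \<open>Walks and simple paths\<close>

lemma walk_Cons: "walk ET (x # xs) \<longleftrightarrow> xs = [] \<or> ({x, hd xs} \<in> ET \<and> walk ET xs)"
  by (cases xs) auto

lemma walk_append:
  "xs \<noteq> [] \<Longrightarrow> ys \<noteq> [] \<Longrightarrow>
   walk ET (xs @ ys) \<longleftrightarrow> walk ET xs \<and> walk ET ys \<and> {last xs, hd ys} \<in> ET"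
  by (induction xs) (auto simp: walk_Cons)

lemma walk_appendD1: "walk ET (xs @ ys) \<Longrightarrow> xs \<noteq> [] \<Longrightarrow> walk ET xs"
  by (cases "ys = []") (auto simp: walk_append)

lemma walk_appendD2: "walk ET (xs @ ys) \<Longrightarrow> ys \<noteq> [] \<Longrightarrow> walk ET ys"
  by (cases "xs = []") (auto simp: walk_append)

lemma walk_join: "walk ET (xs @ [x]) \<Longrightarrow> walk ET (x # ys) \<Longrightarrow> walk ET (xs @ x # ys)"
  by (induction xs) (auto simp: walk_Cons hd_append)

lemma walk_rev: "walk ET (rev xs) \<longleftrightarrow> walk ET xs"
proof (induction xs)
  case (Cons x xs)
  then show ?case
    by (cases "xs = []") (auto simp: walk_append walk_Cons hd_rev last_rev insert_commute)
qed simp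

lemma spath_rev: "spath ET (rev xs) \<longleftrightarrow> spath ET xs"
  by (simp add: spath_def walk_rev)

lemma spath_prefix: "spath ET (xs @ ys) \<Longrightarrow> xs \<noteq> [] \<Longrightarrow> spath ET xs"
  by (auto simp: spath_def dest: walk_appendD1)

lemma spath_suffix: "spath ET (xs @ ys) \<Longrightarrow> ys \<noteq> [] \<Longrightarrow> spath ET ys"
  by (auto simp: spath_def dest: walk_appendD2)

text \<open>Every walk contains a simple path with the same end points, obtained by
  repeatedly cutting out closed subwalks.\<close>
lemma walk_to_spath:
  "walk ET xs \<Longrightarrow> \<exists>ys. spath ET ys \<and> hd ys = hd xs \<and> last ys = last xs \<and> set ys \<subseteq> set xs"
proof (induction "length xs" arbitrary: xs rule: less_induct)
  case less
  show ?case
  proof (cases "distinct xs")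
    case True
    then show ?thesis using less.prems by (auto simp: spath_def)
  next
    case False
    then obtain a x b c where xs: "xs = a @ [x] @ b @ [x] @ c"
      using not_distinct_decomp by blast
    have "walk ET (a @ [x])"
      using less.prems xs walk_appendD1[of ET "a @ [x]" "b @ [x] @ c"] by simp
    moreover have "walk ET (x # c)"
      using less.prems xs walk_appendD2[of ET "a @ [x] @ b" "x # c"] by simp
    ultimately have shortcut: "walk ET (a @ x # c)" by (rule walk_join)
    have "length (a @ x # c) < length xs" using xs by simp
    then obtain ys where ys: "spath ET ys" "hd ys = hd (a @ x # c)"
        "last ys = last (a @ x # c)" "set ys \<subseteq> set (a @ x # c)"
      using less.hyps shortcut by blast
    have "hd (a @ x # c) = hd xs" "last (a @ x # c) = last xs" "set (a @ x # c) \<subseteq> set xs"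
      using xs by (cases a; cases c; auto)+
    then show ?thesis using ys by (intro exI[of _ ys]) auto
  qed
qed

subsection \<open>Unique paths and branches in trees\<close>

locale finite_tree =
  fixes I :: "'b set" and ET :: "'b set set"
  assumes tree: "tree I ET"
begin

lemma finite_nodes: "finite I"
  using tree by (simp add: tree_def graph_def)

lemma edge_nodes: "{u, v} \<in> ET \<Longrightarrow> u \<noteq> v \<and> u \<in> I \<and> v \<in> I"
proof -
  assume "{u, v} \<in> ET"
  then obtain a b where "{u, v} = {a, b}" "a \<noteq> b" "a \<in> I" "b \<in> I"
    using tree unfolding tree_def graph_def by blast
  then show ?thesis by (auto simp: doubleton_eq_iff)
qed

lemma no_cycle: "spath ET xs \<Longrightarrow> length xs \<ge> 3 \<Longrightarrow> {last xs, hd xs} \<in> ET \<Longrightarrow> False"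
  using tree unfolding tree_def by blast

lemma spath_exists: "u \<in> I \<Longrightarrow> v \<in> I \<Longrightarrow> \<exists>xs. spath ET xs \<and> hd xs = u \<and> last xs = v"
proof -
  assume "u \<in> I" "v \<in> I"
  then obtain xs where "walk ET xs" "hd xs = u" "last xs = v"
    using tree unfolding tree_def by blast
  then show ?thesis using walk_to_spath by metis
qed

text \<open>Two simple paths from u that leave u along different edges cannot end at
  the same node: following the first one until it meets the second and returning
  along the second would close a cycle.\<close>
lemma no_diverging_paths:
  assumes sx: "spath ET (u # xs)" and sy: "spath ET (u # ys)" and ne: "xs \<noteq> []" "ys \<noteq> []"
    and last_eq: "last xs = last ys" and hd_ne: "hd xs \<noteq> hd ys"
  shows False
proof -
  have "\<exists>w\<in>set xs. w \<in> set ys" using last_eq ne by (metis last_in_set)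
  then obtain p w q where pwq: "xs = p @ w # q" "w \<in> set ys" "\<forall>z\<in>set p. z \<notin> set ys"
    using split_list_first_prop[of xs "\<lambda>z. z \<in> set ys"] by blast
  obtain s t where st: "ys = s @ w # t" using pwq(2) split_list by metis
  let ?c = "u # p @ w # rev s"
  have w1: "walk ET ((u # p) @ [w])"
    using sx pwq walk_appendD1[of ET "(u # p) @ [w]" q] by (simp add: spath_def)
  have "walk ET (s @ [w])"
    using sy st walk_appendD1[of ET "s @ [w]" t] walk_appendD2[of ET "[u]" "s @ [w] @ t"]
    by (simp add: spath_def)
  then have w2: "walk ET (w # rev s)" using walk_rev[of ET "s @ [w]"] by simp
  have "walk ET ?c" using walk_join[OF w1 w2] by simp
  moreover have "distinct ?c" using sx sy pwq st by (auto simp: spath_def)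
  moreover have "length ?c \<ge> 3" using hd_ne pwq st by (cases p; cases s) auto
  moreover have "{last ?c, u} \<in> ET"
    using sy ne st by (cases s) (auto simp: spath_def walk_Cons insert_commute)
  ultimately show False using no_cycle[of ?c] by (simp add: spath_def)
qed

lemma spath_unique:
  "spath ET xs \<Longrightarrow> spath ET ys \<Longrightarrow> hd xs = hd ys \<Longrightarrow> last xs = last ys \<Longrightarrow> xs = ys"
proof (induction xs arbitrary: ys)
  case Nil
  then show ?case by (simp add: spath_def)
next
  case (Cons u xs')
  obtain ys' where ys: "ys = u # ys'"
    using Cons.prems by (cases ys) (auto simp: spath_def)
  have dx: "distinct (u # xs')" and dy: "distinct (u # ys')"
    using Cons.prems ys by (auto simp: spath_def)
  consider "xs' = []" | "ys' = []" | "xs' \<noteq> []" "ys' \<noteq> []" by blast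
  then show ?case
  proof cases
    case 1
    then show ?thesis using Cons.prems(4) dy ys by (cases ys' rule: rev_cases) auto
  next
    case 2
    then show ?thesis using Cons.prems(4) dx ys by (cases xs' rule: rev_cases) auto
  next
    case 3
    have last_eq: "last xs' = last ys'" using Cons.prems(4) ys 3 by simp
    have "hd xs' = hd ys'"
      using no_diverging_paths[of u xs' ys'] Cons.prems(1,2) ys 3 last_eq by blast
    moreover have "spath ET xs'" "spath ET ys'"
      using spath_suffix[of ET "[u]"] Cons.prems ys 3 by auto
    ultimately show ?thesis using Cons.IH last_eq ys by blast
  qed
qed

definition tpath :: "'b \<Rightarrow> 'b \<Rightarrow> 'b list" where
  "tpath i k = (THE xs. spath ET xs \<and> hd xs = i \<and> last xs = k)"

lemma tpath_eq: "spath ET xs \<Longrightarrow> tpath (hd xs) (last xs) = xs"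
  unfolding tpath_def by (rule the_equality) (auto intro: spath_unique)

lemma tpath: "i \<in> I \<Longrightarrow> k \<in> I \<Longrightarrow> spath ET (tpath i k) \<and> hd (tpath i k) = i \<and> last (tpath i k) = k"
  using spath_exists tpath_eq by metis

lemma tpath_edge: "{l, j} \<in> ET \<Longrightarrow> tpath l j = [l, j]"
  using tpath_eq[of "[l, j]"] edge_nodes[of l j] by (simp add: spath_def)

definition first_hop :: "'b \<Rightarrow> 'b \<Rightarrow> 'b" where
  "first_hop l k = hd (tl (tpath l k))"

definition branch :: "'b \<Rightarrow> 'b \<Rightarrow> 'b set" where
  "branch l j = {k \<in> I. k \<noteq> l \<and> first_hop l k = j}"

lemma branch_nodes: "branch l j \<subseteq> I"
  by (auto simp: branch_def)

lemma tpath_first_hop: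
  assumes "l \<in> I" "k \<in> I" "k \<noteq> l"
  shows "tpath l k = l # tpath (first_hop l k) k \<and> {l, first_hop l k} \<in> ET \<and>
    l \<notin> set (tpath (first_hop l k) k) \<and> first_hop l k \<in> I"
proof -
  have p: "spath ET (tpath l k)" "hd (tpath l k) = l" "last (tpath l k) = k"
    using tpath assms by auto
  then obtain ys where ys: "tpath l k = l # ys" by (cases "tpath l k") (auto simp: spath_def)
  have "ys \<noteq> []" using ys p assms by auto
  then have "spath ET ys" "last ys = k" "{l, hd ys} \<in> ET" "l \<notin> set ys"
    using spath_suffix[of ET "[l]" ys] p ys by (auto simp: spath_def walk_Cons)
  moreover have "hd ys = first_hop l k" using ys by (simp add: first_hop_def)
  ultimately show ?thesis using ys tpath_eq edge_nodes by metis
qed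

lemma in_own_branch: "{l, j} \<in> ET \<Longrightarrow> j \<in> branch l j"
  using tpath_edge[of l j] edge_nodes[of l j] by (auto simp: branch_def first_hop_def)

lemma in_branch_of_first_hop: "l \<in> I \<Longrightarrow> k \<in> I \<Longrightarrow> k \<noteq> l \<Longrightarrow> k \<in> branch l (first_hop l k)"
  by (simp add: branch_def)

lemma branch_tpath:
  "k \<in> branch l j \<Longrightarrow> l \<in> I \<Longrightarrow>
   tpath l k = l # tpath j k \<and> {l, j} \<in> ET \<and> l \<notin> set (tpath j k) \<and> j \<in> I"
  using tpath_first_hop[of l k] by (auto simp: branch_def)

text \<open>Removing an edge {l, j} splits the tree in two: no node lies in both the
  branch at l towards j and the branch at j towards l, ...\<close>
lemma branches_across_edge_disjoint:
  assumes e: "{l, j} \<in> ET" and k: "k \<in> branch l j"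
  shows "k \<notin> branch j l"
proof
  assume k': "k \<in> branch j l"
  have lI: "l \<in> I" and jI: "j \<in> I" using edge_nodes e by auto
  have kI: "k \<in> I" using k branch_nodes by blast
  have "l \<notin> set (tpath j k)" using branch_tpath[OF k lI] by auto
  moreover have "hd (tpath l k) = l" "tpath l k \<noteq> []"
    using tpath[OF lI kI] by (auto simp: spath_def)
  ultimately show False
    using branch_tpath[OF k' jI] by (metis hd_in_set list.set_intros(2))
qed

text \<open>... and every node lies in one of them: if the path from j to k avoids l,
  prefixing l gives the path from l to k, which then starts with the edge to j.\<close>
lemma branches_across_edge_cover:
  assumes e: "{l, j} \<in> ET" and k: "k \<in> I" and a: "k \<notin> branch j l"
  shows "k \<in> branch l j"
proof -
  have lI: "l \<in> I" and jI: "j \<in> I" and lj: "l \<noteq> j" using edge_nodes e by auto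
  have e': "{j, l} \<in> ET" using e by (simp add: insert_commute)
  consider "k = l" | "k = j" | "k \<noteq> l" "k \<noteq> j" by blast
  then show ?thesis
  proof cases
    case 1
    then show ?thesis using a in_own_branch[OF e'] by simp
  next
    case 2
    then show ?thesis using in_own_branch[OF e] by simp
  next
    case 3
    have p: "spath ET (tpath j k)" "hd (tpath j k) = j" "last (tpath j k) = k"
      using tpath jI k by auto
    have "l \<notin> set (tpath j k)"
    proof
      assume "l \<in> set (tpath j k)"
      then obtain a b where ab: "tpath j k = a @ l # b" using split_list by metis
      have "a \<noteq> []" using ab p lj by (cases a) auto
      then have "hd (a @ [l]) = j" using ab p by simp
      moreover have "spath ET (a @ [l])" using spath_prefix[of ET "a @ [l]" b] p ab by simp
      ultimately have "tpath j l = a @ [l]" using tpath_eq by fastforce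
      then have "a = [j]" using tpath_edge[OF e'] by simp
      then have "k \<in> branch j l" using ab k 3 by (simp add: branch_def first_hop_def)
      then show False using a by simp
    qed
    then have "spath ET (l # tpath j k)"
      using p e by (cases "tpath j k") (auto simp: spath_def walk_Cons)
    moreover have "tpath j k \<noteq> []" using p(1) by (auto simp: spath_def)
    ultimately have "tpath l k = l # tpath j k"
      using tpath_eq[of "l # tpath j k"] p(3) by simp
    then show ?thesis using p k 3 by (cases "tpath j k") (auto simp: branch_def first_hop_def)
  qed
qed

lemma branch_swap: "{l, j} \<in> ET \<Longrightarrow> k \<in> I \<Longrightarrow> k \<in> branch l j \<longleftrightarrow> k \<notin> branch j l"
  using branches_across_edge_disjoint branches_across_edge_cover by blast

lemma on_path_across_branches:
  assumes lI: "l \<in> I" and k: "k \<in> branch l j" and k': "k' \<in> branch l j'" and jj: "j \<noteq> j'"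
  shows "on_path ET k l k'"
proof -
  define p where "p = tpath j k"
  define p' where "p' = tpath j' k'"
  have kI: "k \<in> I" "k' \<in> I" using k k' branch_nodes by auto
  have sp: "spath ET (l # p)" "last (l # p) = k" "hd p = j" "p \<noteq> []"
    using branch_tpath[OF k lI] tpath[OF lI kI(1)] tpath[of j k] kI p_def
    by (auto simp: spath_def)
  have sp': "spath ET (l # p')" "last (l # p') = k'" "hd p' = j'" "p' \<noteq> []"
    using branch_tpath[OF k' lI] tpath[OF lI kI(2)] tpath[of j' k'] kI p'_def
    by (auto simp: spath_def)
  have disj: "set p \<inter> set p' = {}"
  proof (rule ccontr)
    assume "set p \<inter> set p' \<noteq> {}"
    then obtain w where "w \<in> set p" "w \<in> set p'" by blast
    then obtain p1 p2 q1 q2 where pq: "p = p1 @ w # p2" "p' = q1 @ w # q2"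
      using split_list by metis
    have "spath ET ((l # p1) @ [w])"
      using spath_prefix[of ET "(l # p1) @ [w]" p2] sp(1) pq(1) by simp
    moreover have "spath ET ((l # q1) @ [w])"
      using spath_prefix[of ET "(l # q1) @ [w]" q2] sp'(1) pq(2) by simp
    ultimately have "tpath l w = l # p1 @ [w]" "tpath l w = l # q1 @ [w]"
      using tpath_eq by fastforce+
    then have "hd p = hd p'" using pq by (cases p1; cases q1) auto
    then show False using sp(3) sp'(3) jj by simp
  qed
  let ?z = "rev p @ l # p'"
  have "walk ET (rev p @ [l])" using sp walk_rev[of ET "l # p"] by (simp add: spath_def)
  moreover have "walk ET (l # p')" using sp'(1) by (simp add: spath_def)
  ultimately have "walk ET ?z" by (rule walk_join)
  moreover have "distinct ?z" using sp sp' disj by (auto simp: spath_def)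
  moreover have "hd ?z = k" "last ?z = k'" using sp sp' by (auto simp: hd_rev)
  ultimately show ?thesis unfolding on_path_def spath_def by (intro exI[of _ ?z]) auto
qed

lemma branch_nested:
  assumes e1: "{l, j} \<in> ET" and e2: "{j, k} \<in> ET" and kl: "k \<noteq> l"
  shows "branch j k \<subset> branch l j"
proof -
  have "branch j k \<subseteq> branch l j"
  proof
    fix m assume m: "m \<in> branch j k"
    then have "m \<notin> branch j l" using kl by (auto simp: branch_def)
    then show "m \<in> branch l j" using branch_swap[OF e1] m branch_nodes by blast
  qed
  moreover have "j \<in> branch l j" "j \<notin> branch j k" using in_own_branch[OF e1] by (auto simp: branch_def)
  ultimately show ?thesis by blast
qed

lemma edge_parent_child:
  assumes rI: "r \<in> I" and e: "{l, j} \<in> ET"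
  shows "child ET r l j \<or> child ET r j l"
proof -
  have toward: "on_path ET r a b" if ab: "{a, b} \<in> ET" and r: "r \<in> branch b a" for a b
  proof -
    have bI: "b \<in> I" using edge_nodes ab by auto
    have a: "tpath b r = b # tpath a r" "a \<in> I" using branch_tpath[OF r bI] by auto
    have p: "spath ET (tpath b r)" "hd (tpath b r) = b" "last (tpath b r) = r"
      using tpath bI rI by auto
    have "hd (tpath a r) = a" "tpath a r \<noteq> []" using tpath[OF a(2) rI] by (auto simp: spath_def)
    then have "a \<in> set (rev (tpath b r))" using a by (metis hd_in_set list.set_intros(2) set_rev)
    moreover have "spath ET (rev (tpath b r))" "hd (rev (tpath b r)) = r" "last (rev (tpath b r)) = b"
      using p spath_rev by (auto simp: hd_rev last_rev)
    ultimately show ?thesis unfolding on_path_def by blast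
  qed
  have e': "{j, l} \<in> ET" using e by (simp add: insert_commute)
  have "r \<in> branch j l \<or> r \<in> branch l j" using branch_swap[OF e rI] by blast
  then show ?thesis
    using toward[OF e] toward[OF e'] e e' edge_nodes[OF e] unfolding child_def by blast
qed

end

subsection \<open>Grouping weights into three classes\<close>

text \<open>Weights that are each at most c and total at most 2c can be grouped into
  three classes of weight at most c each: take a largest subset of weight at most
  c; one more element pushes it above c, so the remaining elements weigh less
  than c.\<close>
lemma three_classes:
  fixes w :: "'j \<Rightarrow> real"
  assumes fin: "finite J" and le: "\<And>j. j \<in> J \<Longrightarrow> w j \<le> c" and tot: "sum w J \<le> 2 * c"
    and c0: "0 \<le> c"
  shows "\<exists>J1 J2 J3. J1 \<union> J2 \<union> J3 = J \<and> J1 \<inter> J2 = {} \<and> J1 \<inter> J3 = {} \<and> J2 \<inter> J3 = {} \<and>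
     sum w J1 \<le> c \<and> sum w J2 \<le> c \<and> sum w J3 \<le> c"
proof -
  let ?P = "\<lambda>A. A \<subseteq> J \<and> sum w A \<le> c"
  have "?P {}" using c0 by simp
  moreover have "\<forall>A. ?P A \<longrightarrow> card A < Suc (card J)"
    using fin by (metis card_mono le_imp_less_Suc)
  ultimately obtain J1 where J1: "?P J1" and maximal: "\<And>A. ?P A \<Longrightarrow> card A \<le> card J1"
    using ex_has_greatest_nat[of ?P "{}" card "Suc (card J)"] by blast
  have fin1: "finite J1" using J1 fin finite_subset by blast
  show ?thesis
  proof (cases "J1 = J")
    case True
    then show ?thesis using J1 c0 by (intro exI[of _ J1] exI[of _ "{}"]) auto
  next
    case False
    then obtain x where x: "x \<in> J" "x \<notin> J1" using J1 by blast
    have "sum w (insert x J1) > c"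
    proof (rule ccontr)
      assume "\<not> ?thesis"
      then have "card (insert x J1) \<le> card J1" using J1 x maximal[of "insert x J1"] by auto
      then show False using x fin1 by simp
    qed
    moreover have "sum w J = sum w (J - insert x J1) + sum w (insert x J1)"
      using J1 x by (intro sum.subset_diff fin) auto
    ultimately have "sum w (J - insert x J1) \<le> c" using tot by linarith
    moreover have "J1 \<union> {x} \<union> (J - insert x J1) = J" using J1 x by auto
    moreover have "sum w {x} \<le> c" using le[OF x(1)] by simp
    ultimately show ?thesis using J1 x by (intro exI[of _ J1] exI[of _ "{x}"] exI[of _ "J - insert x J1"]) auto
  qed
qed

subsection \<open>Parts of a tree decomposition\<close>

locale tree_decomposition =
  fixes V :: "'a set" and E :: "'a set set" and I :: "'b set" and ET :: "'b set set"
    and X :: "'b \<Rightarrow> 'a set"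
  assumes graph: "graph V E" and decomp: "tree_decomp V E I ET X"
begin

sublocale finite_tree I ET
  using decomp by unfold_locales (simp add: tree_decomp_def)

lemma finite_vertices: "finite V"
  using graph by (simp add: graph_def)

lemma bag_subset: "i \<in> I \<Longrightarrow> X i \<subseteq> V"
  using decomp by (simp add: tree_decomp_def)

lemma bags_cover: "v \<in> V \<Longrightarrow> \<exists>i\<in>I. v \<in> X i"
  using decomp by (auto simp: tree_decomp_def)

lemma edge_in_bag: "e \<in> E \<Longrightarrow> \<exists>i\<in>I. e \<subseteq> X i"
  using decomp by (simp add: tree_decomp_def)

lemma finite_bag: "i \<in> I \<Longrightarrow> finite (X i)"
  using bag_subset finite_vertices finite_subset by blast

lemma bags_across_branches:
  assumes "l \<in> I" "k \<in> branch l j" "k' \<in> branch l j'" "j \<noteq> j'"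
  shows "X k \<inter> X k' \<subseteq> X l"
proof -
  have "on_path ET k l k'" "k \<in> I" "k' \<in> I"
    using on_path_across_branches[OF assms] assms(2,3) branch_nodes by auto
  then show ?thesis using decomp assms(1) unfolding tree_decomp_def by blast
qed

definition neighbours :: "'b \<Rightarrow> 'b set" where
  "neighbours l = {j. {l, j} \<in> ET}"

definition part :: "'b \<Rightarrow> 'b \<Rightarrow> 'a set" where
  "part l j = (\<Union>k\<in>branch l j. X k) - X l"

lemma part_subset: "part l j \<subseteq> V - X l"
  using bag_subset branch_nodes unfolding part_def by blast

lemma finite_part: "finite (part l j)"
  using part_subset finite_vertices finite_subset by blast

lemma finite_neighbours: "finite (neighbours l)"
proof -
  have "neighbours l \<subseteq> I" using edge_nodes by (auto simp: neighbours_def)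
  then show ?thesis using finite_nodes by (rule finite_subset)
qed

lemma parts_cover:
  assumes lI: "l \<in> I"
  shows "(\<Union>j\<in>neighbours l. part l j) = V - X l"
proof
  show "(\<Union>j\<in>neighbours l. part l j) \<subseteq> V - X l" using part_subset by blast
next
  show "V - X l \<subseteq> (\<Union>j\<in>neighbours l. part l j)"
  proof
    fix v assume v: "v \<in> V - X l"
    then obtain k where k: "k \<in> I" "v \<in> X k" using bags_cover by blast
    then have kl: "k \<noteq> l" using v by auto
    then have "first_hop l k \<in> neighbours l" "k \<in> branch l (first_hop l k)"
      using tpath_first_hop[OF lI k(1)] in_branch_of_first_hop[OF lI k(1)]
      by (auto simp: neighbours_def)
    then show "v \<in> (\<Union>j\<in>neighbours l. part l j)" using v k unfolding part_def by blast
  qed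
qed

lemma parts_disjoint: "l \<in> I \<Longrightarrow> j \<noteq> j' \<Longrightarrow> part l j \<inter> part l j' = {}"
  using bags_across_branches unfolding part_def by blast

text \<open>An edge of G lies in some bag X k; unless it meets X l, both its end
  vertices belong to the part at l towards the first hop to k.\<close>
lemma parts_no_edge:
  assumes lI: "l \<in> I" and u: "u \<in> part l j" and v: "v \<in> part l j'" and uv: "{u, v} \<in> E"
  shows "j = j'"
proof -
  obtain k where k: "k \<in> I" "{u, v} \<subseteq> X k" using edge_in_bag[OF uv] by blast
  have "k \<noteq> l" using k u unfolding part_def by blast
  then have k_branch: "k \<in> branch l (first_hop l k)"
    using in_branch_of_first_hop[OF lI k(1)] by simp
  have "j = first_hop l k" if "x \<in> part l j" "x \<in> X k" for x j
    using that bags_across_branches[OF lI _ k_branch] unfolding part_def by blast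
  then show ?thesis using u v k by blast
qed

lemma card_parts:
  assumes "l \<in> I" "A \<subseteq> neighbours l"
  shows "card (\<Union>j\<in>A. part l j) = (\<Sum>j\<in>A. card (part l j))"
  using assms finite_neighbours finite_subset
  by (intro card_UN_disjoint) (auto simp: finite_part parts_disjoint)

lemma sum_card_parts:
  assumes lI: "l \<in> I"
  shows "(\<Sum>j\<in>neighbours l. real (card (part l j))) = real (card V) - real (card (X l))"
proof -
  have "card (X l) \<le> card V" by (rule card_mono[OF finite_vertices bag_subset[OF lI]])
  moreover have "card (V - X l) = card V - card (X l)"
    using card_Diff_subset[OF finite_bag[OF lI] bag_subset[OF lI]] .
  ultimately show ?thesis
    using card_parts[OF lI order_refl] parts_cover[OF lI] by (simp add: of_nat_diff flip: of_nat_sum)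
qed

lemma union_parts_disjoint:
  assumes lI: "l \<in> I" and AA': "A \<inter> A' = {}"
  shows "(\<Union>j\<in>A. part l j) \<inter> (\<Union>j\<in>A'. part l j) = {}"
proof (rule equals0I)
  fix x assume "x \<in> (\<Union>j\<in>A. part l j) \<inter> (\<Union>j\<in>A'. part l j)"
  then obtain j j' where "j \<in> A" "j' \<in> A'" "x \<in> part l j" "x \<in> part l j'" by blast
  then show False using parts_disjoint[OF lI, of j j'] AA' by blast
qed

lemma union_parts_no_edge:
  assumes lI: "l \<in> I" and AA': "A \<inter> A' = {}"
  shows "\<forall>u\<in>(\<Union>j\<in>A. part l j). \<forall>v\<in>(\<Union>j\<in>A'. part l j). {u, v} \<notin> E"
proof (intro ballI notI)
  fix u v assume "u \<in> (\<Union>j\<in>A. part l j)" "v \<in> (\<Union>j\<in>A'. part l j)" "{u, v} \<in> E"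
  then obtain j j' where "j \<in> A" "j' \<in> A'" "u \<in> part l j" "v \<in> part l j'" "{u, v} \<in> E"
    by blast
  then show False using parts_no_edge[OF lI] AA' by blast
qed

lemma separator_at:
  assumes lI: "l \<in> I"
    and small: "\<And>j. j \<in> neighbours l \<Longrightarrow>
                  real (card (part l j)) \<le> (real (card V) - real (card (X l)) + 1) / 2"
  shows "\<exists>V1 V2 V3. V1 \<union> V2 \<union> V3 = V - X l \<and>
           V1 \<inter> V2 = {} \<and> V1 \<inter> V3 = {} \<and> V2 \<inter> V3 = {} \<and>
           (\<forall>u\<in>V1. \<forall>v\<in>V2. {u, v} \<notin> E) \<and>
           (\<forall>u\<in>V1. \<forall>v\<in>V3. {u, v} \<notin> E) \<and>
           (\<forall>u\<in>V2. \<forall>v\<in>V3. {u, v} \<notin> E) \<and>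
           (\<forall>W\<in>{V1, V2, V3}. real (card W) \<le> (real (card V) - real (card (X l)) + 1) / 2)"
proof -
  define c where "c = (real (card V) - real (card (X l)) + 1) / 2"
  define U where "U A = (\<Union>j\<in>A. part l j)" for A
  have total: "(\<Sum>j\<in>neighbours l. real (card (part l j))) \<le> 2 * c"
    using sum_card_parts[OF lI] unfolding c_def by simp
  have "0 \<le> c" using card_mono[OF finite_vertices bag_subset[OF lI]] unfolding c_def by simp
  then obtain J1 J2 J3 where J: "J1 \<union> J2 \<union> J3 = neighbours l"
      "J1 \<inter> J2 = {}" "J1 \<inter> J3 = {}" "J2 \<inter> J3 = {}"
      "(\<Sum>j\<in>J1. real (card (part l j))) \<le> c" "(\<Sum>j\<in>J2. real (card (part l j))) \<le> c"
      "(\<Sum>j\<in>J3. real (card (part l j))) \<le> c"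
    using three_classes[OF finite_neighbours _ total] small unfolding c_def by blast
  have size: "real (card (U A)) \<le> c"
    if "A \<subseteq> neighbours l" "(\<Sum>j\<in>A. real (card (part l j))) \<le> c" for A
    using that card_parts[OF lI that(1)] unfolding U_def by (simp flip: of_nat_sum)
  have "U J1 \<union> U J2 \<union> U J3 = U (J1 \<union> J2 \<union> J3)"
    unfolding U_def by (simp only: UN_Un)
  then have "U J1 \<union> U J2 \<union> U J3 = V - X l"
    using J(1) parts_cover[OF lI] unfolding U_def by simp
  moreover have "U J1 \<inter> U J2 = {}" "U J1 \<inter> U J3 = {}" "U J2 \<inter> U J3 = {}"
    unfolding U_def by (rule union_parts_disjoint[OF lI J(2)] union_parts_disjoint[OF lI J(3)]
      union_parts_disjoint[OF lI J(4)])+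
  moreover have "\<forall>u\<in>U J1. \<forall>v\<in>U J2. {u, v} \<notin> E" "\<forall>u\<in>U J1. \<forall>v\<in>U J3. {u, v} \<notin> E"
      "\<forall>u\<in>U J2. \<forall>v\<in>U J3. {u, v} \<notin> E"
    unfolding U_def by (rule union_parts_no_edge[OF lI J(2)] union_parts_no_edge[OF lI J(3)]
      union_parts_no_edge[OF lI J(4)])+
  moreover have "\<forall>W\<in>{U J1, U J2, U J3}. real (card W) \<le> c"
    using size J by auto
  ultimately show ?thesis unfolding c_def by blast
qed

lemma bags_across_edge:
  assumes e: "{l, j} \<in> ET" and k: "k \<in> branch l j" and k': "k' \<in> branch j l"
  shows "X k \<inter> X k' \<subseteq> X l"
proof (cases "k' = l")
  case False
  have lI: "l \<in> I" using edge_nodes[OF e] by simp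
  have k'I: "k' \<in> I" using k' branch_nodes by blast
  have "k' \<notin> branch l j" using branch_swap[OF e k'I] k' by blast
  then have "k' \<in> branch l (first_hop l k')" "first_hop l k' \<noteq> j"
    using in_branch_of_first_hop[OF lI k'I False] by auto
  then show ?thesis using bags_across_branches[OF lI k] by blast
qed simp

lemma parts_across_edge:
  assumes e: "{l, j} \<in> ET"
  shows "part l j \<union> part j l = V - (X l \<inter> X j)" and "part l j \<inter> part j l = {}"
proof -
  have e': "{j, l} \<in> ET" using e by (simp add: insert_commute)
  show "part l j \<union> part j l = V - (X l \<inter> X j)"
  proof
    show "part l j \<union> part j l \<subseteq> V - (X l \<inter> X j)" using part_subset by blast
  next
    show "V - (X l \<inter> X j) \<subseteq> part l j \<union> part j l"
    proof
      fix v assume v: "v \<in> V - (X l \<inter> X j)"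
      then obtain k where k: "k \<in> I" "v \<in> X k" using bags_cover by blast
      have "v \<in> (\<Union>k\<in>branch l j. X k) \<or> v \<in> (\<Union>k\<in>branch j l. X k)"
        using branch_swap[OF e k(1)] k by blast
      moreover have "X l \<subseteq> (\<Union>k\<in>branch j l. X k)" "X j \<subseteq> (\<Union>k\<in>branch l j. X k)"
        using in_own_branch[OF e] in_own_branch[OF e'] by blast+
      ultimately show "v \<in> part l j \<union> part j l" using v unfolding part_def by blast
    qed
  qed
  show "part l j \<inter> part j l = {}"
    using bags_across_edge[OF e] unfolding part_def by blast
qed

lemma card_parts_across_edge:
  assumes e: "{l, j} \<in> ET"
  shows "real (card (part l j)) + real (card (part j l)) = real (card V) - real (card (X l \<inter> X j))"
proof -
  have lI: "l \<in> I" using e edge_nodes by auto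
  have S: "X l \<inter> X j \<subseteq> V" using bag_subset[OF lI] by blast
  have "card (part l j) + card (part j l) = card (V - (X l \<inter> X j))"
    using parts_across_edge[OF e] finite_part
    by (metis card_Un_disjoint)
  also have "\<dots> = card V - card (X l \<inter> X j)"
    using finite_subset[OF S finite_vertices] S by (rule card_Diff_subset)
  finally show ?thesis using card_mono[OF finite_vertices S] by (simp add: of_nat_diff flip: of_nat_add)
qed

definition heavy :: "'b \<Rightarrow> 'b \<Rightarrow> bool" where
  "heavy l j \<longleftrightarrow> {l, j} \<in> ET \<and>
     real (card (part l j)) > (real (card V) - real (card (X l)) + 1) / 2"

text \<open>If the bags of adjacent nodes differ in exactly one vertex, then
  |X l| + |X j| = 2 |X l \<inter> X j| + 1, and the two parts across the edge are too
  small to be heavy in both directions.\<close>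
lemma heavy_one_way:
  assumes h: "heavy l j" and one: "card ((X j - X l) \<union> (X l - X j)) = 1"
  shows "\<not> heavy j l"
proof
  assume h': "heavy j l"
  have e: "{l, j} \<in> ET" using h by (simp add: heavy_def)
  have fin: "finite (X l)" "finite (X j)" using e edge_nodes finite_bag by auto
  have "card (X l) = card (X l \<inter> X j) + card (X l - X j)"
    using card_Int_Diff[OF fin(1)] .
  moreover have "card (X j) = card (X l \<inter> X j) + card (X j - X l)"
    using card_Int_Diff[OF fin(2), of "X l"] by (simp add: Int_commute)
  moreover have "card ((X j - X l) \<union> (X l - X j)) = card (X j - X l) + card (X l - X j)"
    using fin by (intro card_Un_disjoint) auto
  ultimately have "real (card (X l)) + real (card (X j)) = 2 * real (card (X l \<inter> X j)) + 1"
    using one by linarith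
  then show False
    using h h' card_parts_across_edge[OF e] unfolding heavy_def by (simp add: field_simps)
qed

text \<open>Under the one-vertex-change condition some node has no heavy edge: take a
  heavy edge (l, j) whose branch is smallest; a heavy edge (j, k) would have
  k \<noteq> l and a strictly smaller branch.\<close>
lemma exists_light_node:
  assumes one: "\<And>l j. {l, j} \<in> ET \<Longrightarrow> card ((X j - X l) \<union> (X l - X j)) = 1"
  shows "\<exists>l\<in>I. \<forall>j. \<not> heavy l j"
proof (cases "\<exists>l j. heavy l j")
  case False
  then show ?thesis using tree by (auto simp: tree_def)
next
  case True
  then obtain l0 j0 where "heavy l0 j0" by blast
  then obtain l j where h: "heavy l j"
    and smallest: "\<And>l' j'. heavy l' j' \<Longrightarrow> card (branch l j) \<le> card (branch l' j')"
    using ex_has_least_nat[of "\<lambda>(l, j). heavy l j" "(l0, j0)" "\<lambda>(l, j). card (branch l j)"]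
    by fastforce
  have e: "{l, j} \<in> ET" using h by (simp add: heavy_def)
  have "\<not> heavy j k" for k
  proof
    assume h': "heavy j k"
    show False
    proof (cases "k = l")
      case True
      then show False using heavy_one_way[OF h one[OF e]] h' by simp
    next
      case False
      have "{j, k} \<in> ET" using h' by (simp add: heavy_def)
      then have "branch j k \<subset> branch l j" using branch_nested[OF e _ False] by simp
      then have "card (branch j k) < card (branch l j)"
        by (rule psubset_card_mono[OF finite_subset[OF branch_nodes finite_nodes]])
      then show False using smallest[OF h'] by simp
    qed
  qed
  moreover have "j \<in> I" using e edge_nodes by auto
  ultimately show ?thesis by blast
qed

end

theorem lemma3:
  fixes V :: "'a set" and E :: "'a set set" and n t :: nat
    and I :: "'b set" and r :: 'b and ET :: "'b set set" and X :: "'b \<Rightarrow> 'a set"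
  assumes "graph V E" and "card V = n" and "treewidth V E = t"
    and "normalized_tree_decomp V E I r ET X" and "width I X = t"
  shows "\<exists>l\<in>I. \<exists>V1 V2 V3. V1 \<union> V2 \<union> V3 = V - X l \<and>
           V1 \<inter> V2 = {} \<and> V1 \<inter> V3 = {} \<and> V2 \<inter> V3 = {} \<and>
           (\<forall>u\<in>V1. \<forall>v\<in>V2. {u, v} \<notin> E) \<and>
           (\<forall>u\<in>V1. \<forall>v\<in>V3. {u, v} \<notin> E) \<and>
           (\<forall>u\<in>V2. \<forall>v\<in>V3. {u, v} \<notin> E) \<and>
           (\<forall>W\<in>{V1, V2, V3}. real (card W) \<le> (real n - real (card (X l)) + 1) / 2)"
proof -
  have rI: "r \<in> I"
    and norm: "\<forall>i\<in>I. \<forall>i'\<in>I. child ET r i i' \<longrightarrow> card ((X i' - X i) \<union> (X i - X i')) = 1"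
    using assms(4) by (auto simp: normalized_tree_decomp_def)
  interpret tree_decomposition V E I ET X
    using assms(1,4) by unfold_locales (auto simp: normalized_tree_decomp_def)
  txt \<open>Every edge of T joins a parent and a child, whose bags differ in one vertex.\<close>
  have "card ((X j - X l) \<union> (X l - X j)) = 1" if e: "{l, j} \<in> ET" for l j
    using edge_parent_child[OF rI e] norm edge_nodes[OF e] by (metis Un_commute)
  then obtain l where lI: "l \<in> I" and light: "\<forall>j. \<not> heavy l j"
    using exists_light_node by blast
  then have "real (card (part l j)) \<le> (real (card V) - real (card (X l)) + 1) / 2"
    if "j \<in> neighbours l" for j
    using that by (auto simp: heavy_def neighbours_def not_less)
  then show ?thesis using separator_at[OF lI] assms(2) lI by blast
qed

end
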